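(* Under Assumptions 1-MP, 2-MP (a),(b),(c) and 3-MP, let $g\in\mathcal{G}\setminus\{\mathcal{T}+1\}$ and $1\le t_1\le t_2<g\le t_3\le t_4\le\mathcal{T}$, and let $d\in\mathcal{D}_+$. (1) If 4-MP(a) holds and $(a,b)\mapsto\overline{ATT}^{(t_3,t_4)}(g,a|g,b)$ is differentiable on $\mathcal{D}_+\times\mathcal{D}_+$, then $$\frac{\partial\,\mathbb{E}[\bar Y^{(t_3,t_4)}-\bar Y^{(t_1,t_2)}\mid G=g,D=d]}{\partial d}=\overline{ACRT}^{(t_3,t_4)}(g,d|g,d)+\frac{\partial\overline{ATT}^{(t_3,t_4)}(g,d|g,l)}{\partial l}\Big|_{l=d}.$$ (2) If 5-MP holds, then $\frac{\partial\,\mathbb{E}[\bar Y^{(t_3,t_4)}-\bar Y^{(t_1,t_2)}\mid G=g,D=d]}{\partial d}=\overline{ACR}^{(t_3,t_4)}(g,d)$.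
   Context: Multi-period setup. Periods $t=1,\dots,\mathcal{T}$. Each unit has a timing group $G\in\mathcal{G}\subseteq\{2,\dots,\mathcal{T}+1\}$ ($G=\mathcal{T}+1$ means never treated) and a dose $D\ge0$, with $D=0$ exactly for never-treated units and $D\in\mathcal{D}_+$ for units with $G\le\mathcal{T}$. Potential outcomes $Y_t(g,d)$; $Y_t(0):=Y_t(\mathcal{T}+1,0)$. $W_t:=D\mathbf{1}\{t\ge G\}$. Observed $Y_t=Y_t(0)\mathbf{1}\{t<G\}+Y_t(G,D)\mathbf{1}\{t\ge G\}$; finite means. 1-MP: i.i.d. sampling. 2-MP: (a) support of $D$ is $\{0\}\cup\mathcal{D}_+$, $\mathbb{P}(D=0)>0$, every $d\in\mathcal{D}_+$ in the support of $D\mid G=g$ for $g\le\mathcal{T}$; (b) $\mathcal{D}_+=[d_L,d_U]$, $0<d_L<d_U<\infty$; (c) $d\mapsto\mathbb{E}[\Delta Y_t\mid G=g,D=d]$ continuously differentiable on $\mathcal{D}_+$. 3-MP: (a) $Y_t(g,d)=Y_t(0)$ for $t<g$; (b) $W_1=0$, $W_{t-1}=d\Rightarrow W_t=d$. 4-MP(a): for all $g\in\mathcal{G}$, $t=2,\dots,\mathcal{T}$, $d\in\mathcal{D}$: $\mathbb{E}[Y_t(0)-Y_{t-1}(0)\mid G=g,D=d]=\mathbb{E}[Y_t(0)-Y_{t-1}(0)\mid D=0]$. 5-MP: for all $g\in\mathcal{G}$, $t=2,\dots,\mathcal{T}$, $d\in\mathcal{D}$: $\mathbb{E}[Y_t(g,d)-Y_{t-1}(0)\mid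 G=g,D=d]=\mathbb{E}[Y_t(g,d)-Y_{t-1}(0)\mid G=g]$ and $\mathbb{E}[Y_t(0)-Y_{t-1}(0)\mid G=g,D=d]=\mathbb{E}[Y_t(0)-Y_{t-1}(0)\mid D=0]$. Notation: $\bar Y^{(t_1,t_2)}:=\frac1{t_2-t_1+1}\sum_{t=t_1}^{t_2}Y_t$. $ATE(g,t,d):=\mathbb{E}[Y_t(g,d)-Y_t(0)\mid G=g]$; $\overline{ATE}^{(t_3,t_4)}(g,d):=\frac1{t_4-t_3+1}\sum_{t=t_3}^{t_4}ATE(g,t,d)$, $\overline{ACR}^{(t_3,t_4)}(g,d):=\partial\overline{ATE}^{(t_3,t_4)}(g,d)/\partial d$; $\overline{ATT}^{(t_3,t_4)}(g,a|g,b):=\mathbb{E}[\frac1{t_4-t_3+1}\sum_{t=t_3}^{t_4}(Y_t(g,a)-Y_t(0))\mid G=g,D=b]$; $\overline{ACRT}^{(t_3,t_4)}(g,d|g,d):=\partial\overline{ATT}^{(t_3,t_4)}(g,l|g,d)/\partial l|_{l=d}$. *)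

theory Defs
  imports "HOL-Probability.Probability"
begin

text \<open>Potential outcomes: Ypo t g d \<omega> = Y_t(g,d)(\<omega>); the untreated potential
  outcome is Y_t(0) = Ypo t (T+1) 0.  Timing group G, dose D.
  Conditional expectations given (G = g, D = d) (a null event for continuous D)
  are integrals against a regular conditional distribution kappa g d.\<close>

definition Y0 :: "nat \<Rightarrow> (nat \<Rightarrow> nat \<Rightarrow> real \<Rightarrow> 'a \<Rightarrow> real) \<Rightarrow> nat \<Rightarrow> 'a \<Rightarrow> real" where
  "Y0 T Ypo t = Ypo t (Suc T) 0"

definition Yobs :: "nat \<Rightarrow> (nat \<Rightarrow> nat \<Rightarrow> real \<Rightarrow> 'a \<Rightarrow> real) \<Rightarrow> ('a \<Rightarrow> nat) \<Rightarrow> ('a \<Rightarrow> real)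
    \<Rightarrow> nat \<Rightarrow> 'a \<Rightarrow> real" where
  "Yobs T Ypo G D t \<omega> = (if t < G \<omega> then Y0 T Ypo t \<omega> else Ypo t (G \<omega>) (D \<omega>) \<omega>)"

definition Wpath :: "('a \<Rightarrow> nat) \<Rightarrow> ('a \<Rightarrow> real) \<Rightarrow> nat \<Rightarrow> 'a \<Rightarrow> real" where
  "Wpath G D t \<omega> = (if G \<omega> \<le> t then D \<omega> else 0)"

definition tavg :: "nat \<Rightarrow> nat \<Rightarrow> (nat \<Rightarrow> real) \<Rightarrow> real" where
  "tavg t1 t2 f = (\<Sum>t = t1..t2. f t) / real (t2 - t1 + 1)"

definition condE_G :: "'a measure \<Rightarrow> ('a \<Rightarrow> nat) \<Rightarrow> nat \<Rightarrow> ('a \<Rightarrow> real) \<Rightarrow> real" where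
  "condE_G M G g X =
     (\<integral>\<omega>. X \<omega> * indicator {\<omega> \<in> space M. G \<omega> = g} \<omega> \<partial>M) / measure M {\<omega> \<in> space M. G \<omega> = g}"

definition condE_D0 :: "'a measure \<Rightarrow> ('a \<Rightarrow> real) \<Rightarrow> ('a \<Rightarrow> real) \<Rightarrow> real" where
  "condE_D0 M D X =
     (\<integral>\<omega>. X \<omega> * indicator {\<omega> \<in> space M. D \<omega> = 0} \<omega> \<partial>M) / measure M {\<omega> \<in> space M. D \<omega> = 0}"

definition condE_GD :: "(nat \<Rightarrow> real \<Rightarrow> 'a measure) \<Rightarrow> nat \<Rightarrow> real \<Rightarrow> ('a \<Rightarrow> real) \<Rightarrow> real" where
  "condE_GD \<kappa> g d X = (\<integral>\<omega>. X \<omega> \<partial>(\<kappa> g d))"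

definition is_cond_dist ::
  "'a measure \<Rightarrow> ('a \<Rightarrow> nat) \<Rightarrow> ('a \<Rightarrow> real) \<Rightarrow> real set \<Rightarrow> (nat \<Rightarrow> real \<Rightarrow> 'a measure) \<Rightarrow> nat \<Rightarrow> bool" where
  "is_cond_dist M G D Dp \<kappa> g \<longleftrightarrow>
     (\<forall>d\<in>Dp. prob_space (\<kappa> g d) \<and> sets (\<kappa> g d) = sets M \<and>
              (AE \<omega> in \<kappa> g d. G \<omega> = g \<and> D \<omega> = d)) \<and>
     (\<forall>A\<in>sets M. (\<lambda>d. emeasure (\<kappa> g d) A) \<in> borel_measurable borel) \<and>
     (\<forall>A\<in>sets M. \<forall>B\<in>sets borel.
        emeasure M (A \<inter> {\<omega> \<in> space M. G \<omega> = g \<and> D \<omega> \<in> B}) =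
        (\<integral>\<^sup>+\<omega>\<in>{\<omega> \<in> space M. G \<omega> = g \<and> D \<omega> \<in> B}. emeasure (\<kappa> g (D \<omega>)) A \<partial>M))"

definition C1_within :: "real set \<Rightarrow> (real \<Rightarrow> real) \<Rightarrow> bool" where
  "C1_within S f \<longleftrightarrow>
     (\<exists>f'. continuous_on S f' \<and> (\<forall>x\<in>S. (f has_real_derivative f' x) (at x within S)))"

definition PT4a ::
  "'a measure \<Rightarrow> nat \<Rightarrow> nat set \<Rightarrow> ('a \<Rightarrow> real) \<Rightarrow> real set
     \<Rightarrow> (nat \<Rightarrow> nat \<Rightarrow> real \<Rightarrow> 'a \<Rightarrow> real) \<Rightarrow> (nat \<Rightarrow> real \<Rightarrow> 'a measure) \<Rightarrow> bool" where
  "PT4a M T Gs D Dp Ypo \<kappa> \<longleftrightarrow>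
     (\<forall>g\<in>Gs. g \<le> T \<longrightarrow> (\<forall>t\<in>{2..T}. \<forall>d\<in>Dp.
        condE_GD \<kappa> g d (\<lambda>\<omega>. Y0 T Ypo t \<omega> - Y0 T Ypo (t - 1) \<omega>)
        = condE_D0 M D (\<lambda>\<omega>. Y0 T Ypo t \<omega> - Y0 T Ypo (t - 1) \<omega>)))"

definition PT5 ::
  "'a measure \<Rightarrow> nat \<Rightarrow> nat set \<Rightarrow> ('a \<Rightarrow> nat) \<Rightarrow> ('a \<Rightarrow> real) \<Rightarrow> real set
     \<Rightarrow> (nat \<Rightarrow> nat \<Rightarrow> real \<Rightarrow> 'a \<Rightarrow> real) \<Rightarrow> (nat \<Rightarrow> real \<Rightarrow> 'a measure) \<Rightarrow> bool" where
  "PT5 M T Gs G D Dp Ypo \<kappa> \<longleftrightarrow>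
     (\<forall>g\<in>Gs. g \<le> T \<longrightarrow> (\<forall>t\<in>{2..T}. \<forall>d\<in>Dp.
        condE_GD \<kappa> g d (\<lambda>\<omega>. Ypo t g d \<omega> - Y0 T Ypo (t - 1) \<omega>)
        = condE_G M G g (\<lambda>\<omega>. Ypo t g d \<omega> - Y0 T Ypo (t - 1) \<omega>))) \<and>
     PT4a M T Gs D Dp Ypo \<kappa>"

definition ATTbar ::
  "nat \<Rightarrow> (nat \<Rightarrow> nat \<Rightarrow> real \<Rightarrow> 'a \<Rightarrow> real) \<Rightarrow> (nat \<Rightarrow> real \<Rightarrow> 'a measure)
     \<Rightarrow> nat \<Rightarrow> nat \<Rightarrow> nat \<Rightarrow> real \<Rightarrow> real \<Rightarrow> real" where
  "ATTbar T Ypo \<kappa> t3 t4 g a b =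
     condE_GD \<kappa> g b (\<lambda>\<omega>. tavg t3 t4 (\<lambda>t. Ypo t g a \<omega> - Y0 T Ypo t \<omega>))"

definition ATEbar ::
  "'a measure \<Rightarrow> nat \<Rightarrow> ('a \<Rightarrow> nat) \<Rightarrow> (nat \<Rightarrow> nat \<Rightarrow> real \<Rightarrow> 'a \<Rightarrow> real)
     \<Rightarrow> nat \<Rightarrow> nat \<Rightarrow> nat \<Rightarrow> real \<Rightarrow> real" where
  "ATEbar M T G Ypo t3 t4 g d =
     tavg t3 t4 (\<lambda>t. condE_G M G g (\<lambda>\<omega>. Ypo t g d \<omega> - Y0 T Ypo t \<omega>))"

end

theory Submission
  imports Defs
begin

text \<open>Conditioning on \<open>G = g, D = x\<close> turns observed outcomes into the potential outcomes
  \<open>Y\<^sub>t(g, x)\<close> almost surely, and no anticipation identifies them with \<open>Y\<^sub>t(0)\<close> before \<open>g\<close>.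
  Under parallel trends the untreated mean path \<open>E[Y\<^sub>t(0) | G = g, D = x]\<close> moves by
  dose-free increments, so the did contrast equals \<open>ATT(g, x | g, x)\<close> up to a constant in \<open>x\<close>;
  the chain rule along the diagonal then splits its derivative into the two partials.
  Under 5-MP also \<open>ATE(g, x)\<close> differs from \<open>ATT(g, x | g, x)\<close> by a constant, and the did
  contrast is differentiable because it telescopes into averaged sums of the differentiable
  conditional increments of 2-MP(c).\<close>

lemma tavg_cong: "(\<And>t. t \<in> {a..b} \<Longrightarrow> f t = h t) \<Longrightarrow> tavg a b f = tavg a b h"
  unfolding tavg_def by (metis sum.cong)

lemma tavg_diff: "tavg a b (\<lambda>t. f t - h t) = tavg a b f - tavg a b h"
  unfolding tavg_def by (simp add: sum_subtractf diff_divide_distrib)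

lemma tavg_add: "tavg a b (\<lambda>t. f t + h t) = tavg a b f + tavg a b h"
  unfolding tavg_def by (simp add: sum.distrib add_divide_distrib)

lemma tavg_const: "a \<le> b \<Longrightarrow> tavg a b (\<lambda>t. c) = c"
  unfolding tavg_def by (simp add: Suc_diff_le)

lemma DERIV_tavg:
  assumes "\<And>t. t \<in> {a..b} \<Longrightarrow> ((\<lambda>x. f x t) has_real_derivative f' t) (at z within S)"
  shows "((\<lambda>x. tavg a b (f x)) has_real_derivative tavg a b f') (at z within S)"
  unfolding tavg_def by (intro DERIV_cdivide DERIV_sum assms)

lemma integrable_tavg:
  "(\<And>t. t \<in> {a..b} \<Longrightarrow> integrable N (f t)) \<Longrightarrow> integrable N (\<lambda>\<omega>. tavg a b (\<lambda>t. f t \<omega>))"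
  unfolding tavg_def by (intro integrable_divide Bochner_Integration.integrable_sum)

lemma integral_tavg:
  "(\<And>t. t \<in> {a..b} \<Longrightarrow> integrable N (f t)) \<Longrightarrow>
     (\<integral>\<omega>. tavg a b (\<lambda>t. f t \<omega>) \<partial>N) = tavg a b (\<lambda>t. \<integral>\<omega>. f t \<omega> \<partial>N)"
  unfolding tavg_def by (simp add: integral_sum)

lemma telescope_from_one:
  fixes f :: "nat \<Rightarrow> 'a::ab_group_add"
  assumes "1 \<le> t"
  shows "f t = f 1 + (\<Sum>s=2..t. f s - f (s - 1))"
  using assms
proof (induction t rule: dec_induct)
  case (step n)
  then show ?case by (simp add: sum.cl_ivl_Suc)
qed simp

lemma DERIV_transform_add_const:
  assumes "(f has_real_derivative L) (at x within S)" "x \<in> S" "\<And>y. y \<in> S \<Longrightarrow> h y = f y + c"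
  shows "(h has_real_derivative L) (at x within S)"
proof -
  have "((\<lambda>y. f y + c) has_real_derivative L) (at x within S)"
    using DERIV_add[OF assms(1) DERIV_const] by simp
  then show ?thesis
    by (rule has_field_derivative_transform_within[where d=1]) (use assms in auto)
qed

lemma has_real_derivative_diagonal:
  fixes A :: "real \<Rightarrow> real \<Rightarrow> real"
  assumes "(\<lambda>(a, b). A a b) differentiable (at (x, x) within S \<times> S)" and "x \<in> S"
  shows "\<exists>La Lb. ((\<lambda>a. A a x) has_real_derivative La) (at x within S) \<and>
                 ((\<lambda>b. A x b) has_real_derivative Lb) (at x within S) \<and>
                 ((\<lambda>y. A y y) has_real_derivative La + Lb) (at x within S)"
proof -
  obtain A' where A': "((\<lambda>(a, b). A a b) has_derivative A') (at (x, x) within S \<times> S)"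
    using assms(1) unfolding differentiable_def by blast
  have lin: "linear A'" using A' by (rule has_derivative_linear)
  have along: "((\<lambda>y. A (fst (\<phi> y)) (snd (\<phi> y))) has_real_derivative A' v) (at x within S)"
    if \<phi>: "(\<phi> has_derivative (\<lambda>h. h *\<^sub>R v)) (at x within S)" "\<phi> x = (x, x)" "\<phi> ` S \<subseteq> S \<times> S"
    for \<phi> v
  proof -
    have "((\<lambda>y. (\<lambda>(a, b). A a b) (\<phi> y)) has_derivative (\<lambda>h. A' (h *\<^sub>R v))) (at x within S)"
      using has_derivative_in_compose[OF \<phi>(1)] has_derivative_subset[OF A' \<phi>(3)] \<phi>(2) by simp
    moreover have "(\<lambda>h. A' (h *\<^sub>R v)) = (*) (A' v)"
      using linear_scale[OF lin] by (auto simp: mult.commute)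
    ultimately show ?thesis
      unfolding has_field_derivative_def by (simp add: case_prod_beta)
  qed
  have pair_derivs:
    "((\<lambda>y. (y, x)) has_derivative (\<lambda>h. h *\<^sub>R (1, 0))) (at x within S)"
    "((\<lambda>y. (x, y)) has_derivative (\<lambda>h. h *\<^sub>R (0, 1))) (at x within S)"
    "((\<lambda>y. (y, y)) has_derivative (\<lambda>h. h *\<^sub>R (1, 1))) (at x within S)"
    by (auto intro!: derivative_eq_intros)
  have "A' (1, 1) = A' (1, 0) + A' (0, 1)"
    using linear_add[OF lin, of "(1, 0)" "(0, 1)"] by simp
  then show ?thesis
    using along[OF pair_derivs(1)] along[OF pair_derivs(2)] along[OF pair_derivs(3)] assms(2)
    by auto
qed

lemma condE_G_diff:
  assumes "G \<in> measurable M (count_space UNIV)" "integrable M f" "integrable M h"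
  shows "condE_G M G g (\<lambda>\<omega>. f \<omega> - h \<omega>) = condE_G M G g f - condE_G M G g h"
proof -
  have "{\<omega>\<in>space M. G \<omega> = g} \<in> sets M"
    using measurable_sets[OF assms(1), of "{g}"] by (simp add: vimage_def Int_def conj_commute)
  then have "integrable M (\<lambda>\<omega>. f \<omega> * indicator {\<omega>\<in>space M. G \<omega> = g} \<omega>)"
    and "integrable M (\<lambda>\<omega>. h \<omega> * indicator {\<omega>\<in>space M. G \<omega> = g} \<omega>)"
    using assms(2,3) by (auto intro: integrable_real_mult_indicator)
  then show ?thesis
    unfolding condE_G_def left_diff_distrib by (simp add: diff_divide_distrib)
qed

locale treated_group =
  fixes M :: "'a measure" and T :: nat and G :: "'a \<Rightarrow> nat" and D :: "'a \<Rightarrow> real"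
    and S :: "real set" and Ypo :: "nat \<Rightarrow> nat \<Rightarrow> real \<Rightarrow> 'a \<Rightarrow> real"
    and \<kappa> :: "nat \<Rightarrow> real \<Rightarrow> 'a measure" and g :: nat
  assumes cond_dist: "is_cond_dist M G D S \<kappa> g"
    and no_anticipation: "\<And>x t \<omega>. x \<in> S \<Longrightarrow> t < g \<Longrightarrow> \<omega> \<in> space M \<Longrightarrow> Ypo t g x \<omega> = Y0 T Ypo t \<omega>"
    and integrable_treated: "\<And>x t. x \<in> S \<Longrightarrow> t \<in> {1..T} \<Longrightarrow> integrable (\<kappa> g x) (Ypo t g x)"
    and integrable_untreated: "\<And>x t. x \<in> S \<Longrightarrow> t \<in> {1..T} \<Longrightarrow> integrable (\<kappa> g x) (Y0 T Ypo t)"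
    and Yobs_measurable: "\<And>t. t \<in> {1..T} \<Longrightarrow> Yobs T Ypo G D t \<in> borel_measurable M"
begin

definition treated_mean :: "real \<Rightarrow> nat \<Rightarrow> real" where
  "treated_mean x t = condE_GD \<kappa> g x (Ypo t g x)"

definition untreated_mean :: "real \<Rightarrow> nat \<Rightarrow> real" where
  "untreated_mean x t = condE_GD \<kappa> g x (Y0 T Ypo t)"

definition did_mean :: "nat \<Rightarrow> nat \<Rightarrow> nat \<Rightarrow> nat \<Rightarrow> real \<Rightarrow> real" where
  "did_mean t1 t2 t3 t4 x =
     condE_GD \<kappa> g x (\<lambda>\<omega>. tavg t3 t4 (\<lambda>t. Yobs T Ypo G D t \<omega>) - tavg t1 t2 (\<lambda>t. Yobs T Ypo G D t \<omega>))"

definition dose_invariant_trend :: "(nat \<Rightarrow> real) \<Rightarrow> bool" where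
  "dose_invariant_trend \<delta> \<longleftrightarrow> (\<forall>x\<in>S. \<forall>s\<in>{2..T}.
     condE_GD \<kappa> g x (\<lambda>\<omega>. Y0 T Ypo s \<omega> - Y0 T Ypo (s - 1) \<omega>) = \<delta> s)"

definition no_selection_on_dose :: bool where
  "no_selection_on_dose \<longleftrightarrow> (\<forall>x\<in>S. \<forall>t\<in>{2..T}.
     condE_GD \<kappa> g x (\<lambda>\<omega>. Ypo t g x \<omega> - Y0 T Ypo (t - 1) \<omega>)
     = condE_G M G g (\<lambda>\<omega>. Ypo t g x \<omega> - Y0 T Ypo (t - 1) \<omega>))"

lemma dose_invariant_trendD:
  "dose_invariant_trend \<delta> \<Longrightarrow> x \<in> S \<Longrightarrow> s \<in> {2..T} \<Longrightarrow>
     condE_GD \<kappa> g x (\<lambda>\<omega>. Y0 T Ypo s \<omega> - Y0 T Ypo (s - 1) \<omega>) = \<delta> s"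
  unfolding dose_invariant_trend_def by blast

lemma no_selection_on_doseD:
  "no_selection_on_dose \<Longrightarrow> x \<in> S \<Longrightarrow> t \<in> {2..T} \<Longrightarrow>
     condE_GD \<kappa> g x (\<lambda>\<omega>. Ypo t g x \<omega> - Y0 T Ypo (t - 1) \<omega>)
     = condE_G M G g (\<lambda>\<omega>. Ypo t g x \<omega> - Y0 T Ypo (t - 1) \<omega>)"
  unfolding no_selection_on_dose_def by blast

lemma sets_kappa: "x \<in> S \<Longrightarrow> sets (\<kappa> g x) = sets M"
  using cond_dist unfolding is_cond_dist_def by blast

lemma space_kappa: "x \<in> S \<Longrightarrow> space (\<kappa> g x) = space M"
  using sets_kappa by (rule sets_eq_imp_space_eq)

lemma AE_kappa_group_dose: "x \<in> S \<Longrightarrow> AE \<omega> in \<kappa> g x. G \<omega> = g \<and> D \<omega> = x"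
  using cond_dist unfolding is_cond_dist_def by blast

lemma AE_Yobs_eq_treated:
  assumes "x \<in> S"
  shows "AE \<omega> in \<kappa> g x. Yobs T Ypo G D t \<omega> = Ypo t g x \<omega>"
  using AE_kappa_group_dose[OF assms] AE_space
proof eventually_elim
  case (elim \<omega>)
  then show ?case
    using no_anticipation[OF assms] space_kappa[OF assms] unfolding Yobs_def by auto
qed

lemma
  assumes "x \<in> S" "t \<in> {1..T}"
  shows integrable_Yobs: "integrable (\<kappa> g x) (Yobs T Ypo G D t)"
    and condE_GD_Yobs: "condE_GD \<kappa> g x (Yobs T Ypo G D t) = treated_mean x t"
proof -
  have "Yobs T Ypo G D t \<in> borel_measurable (\<kappa> g x)"
    using Yobs_measurable[OF assms(2)] measurable_cong_sets[OF sets_kappa[OF assms(1)] refl] by blast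
  moreover have "Ypo t g x \<in> borel_measurable (\<kappa> g x)"
    using integrable_treated[OF assms] by (rule borel_measurable_integrable)
  ultimately show "integrable (\<kappa> g x) (Yobs T Ypo G D t)"
    and "condE_GD \<kappa> g x (Yobs T Ypo G D t) = treated_mean x t"
    using integrable_cong_AE integral_cong_AE AE_Yobs_eq_treated[OF assms(1)] integrable_treated[OF assms]
    unfolding treated_mean_def condE_GD_def by blast+
qed

lemma treated_mean_before_treatment:
  assumes "x \<in> S" "t < g"
  shows "treated_mean x t = untreated_mean x t"
  unfolding treated_mean_def untreated_mean_def condE_GD_def
  by (rule Bochner_Integration.integral_cong) (use assms no_anticipation space_kappa in auto)

lemma
  assumes "x \<in> S" "{a..b} \<subseteq> {1..T}"
  shows integrable_tavg_Yobs: "integrable (\<kappa> g x) (\<lambda>\<omega>. tavg a b (\<lambda>t. Yobs T Ypo G D t \<omega>))"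
    and condE_GD_tavg_Yobs:
      "condE_GD \<kappa> g x (\<lambda>\<omega>. tavg a b (\<lambda>t. Yobs T Ypo G D t \<omega>)) = tavg a b (treated_mean x)"
proof -
  have Yobs_ab: "integrable (\<kappa> g x) (Yobs T Ypo G D t)" if "t \<in> {a..b}" for t
    using integrable_Yobs assms that by blast
  then show "integrable (\<kappa> g x) (\<lambda>\<omega>. tavg a b (\<lambda>t. Yobs T Ypo G D t \<omega>))"
    by (rule integrable_tavg)
  have "condE_GD \<kappa> g x (\<lambda>\<omega>. tavg a b (\<lambda>t. Yobs T Ypo G D t \<omega>))
      = tavg a b (\<lambda>t. condE_GD \<kappa> g x (Yobs T Ypo G D t))"
    unfolding condE_GD_def using Yobs_ab by (rule integral_tavg)
  also have "\<dots> = tavg a b (treated_mean x)"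
    using condE_GD_Yobs assms by (intro tavg_cong) blast
  finally show "condE_GD \<kappa> g x (\<lambda>\<omega>. tavg a b (\<lambda>t. Yobs T Ypo G D t \<omega>)) = tavg a b (treated_mean x)" .
qed

lemma did_mean_eq:
  assumes "x \<in> S" "{t1..t2} \<subseteq> {1..T}" "{t3..t4} \<subseteq> {1..T}"
  shows "did_mean t1 t2 t3 t4 x
         = tavg t3 t4 (treated_mean x) - tavg t1 t2 (treated_mean x)"
  using integrable_tavg_Yobs[OF assms(1)] condE_GD_tavg_Yobs[OF assms(1)] assms(2,3)
  unfolding did_mean_def condE_GD_def by (simp add: Bochner_Integration.integral_diff)

lemma condE_GD_Yobs_increment:
  assumes "x \<in> S" "s \<in> {2..T}"
  shows "condE_GD \<kappa> g x (\<lambda>\<omega>. Yobs T Ypo G D s \<omega> - Yobs T Ypo G D (s - 1) \<omega>)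
         = treated_mean x s - treated_mean x (s - 1)"
proof -
  have "s \<in> {1..T}" "s - 1 \<in> {1..T}" using assms(2) by auto
  then show ?thesis
    using integrable_Yobs condE_GD_Yobs assms(1) unfolding condE_GD_def
    by (simp add: Bochner_Integration.integral_diff)
qed

lemma ATTbar_diagonal:
  assumes "x \<in> S" "{t3..t4} \<subseteq> {1..T}"
  shows "ATTbar T Ypo \<kappa> t3 t4 g x x = tavg t3 t4 (\<lambda>t. treated_mean x t - untreated_mean x t)"
proof -
  have "integrable (\<kappa> g x) (\<lambda>\<omega>. Ypo t g x \<omega> - Y0 T Ypo t \<omega>)"
    and "condE_GD \<kappa> g x (\<lambda>\<omega>. Ypo t g x \<omega> - Y0 T Ypo t \<omega>) = treated_mean x t - untreated_mean x t"
    if "t \<in> {t3..t4}" for t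
    using integrable_treated integrable_untreated assms that
    unfolding treated_mean_def untreated_mean_def condE_GD_def
    by (auto simp: Bochner_Integration.integral_diff)
  then show ?thesis
    unfolding ATTbar_def condE_GD_def
    by (subst integral_tavg) (auto intro: tavg_cong)
qed

lemma untreated_mean_trend:
  assumes trend: "dose_invariant_trend \<delta>"
    and "x \<in> S" "t \<in> {1..T}"
  shows "untreated_mean x t = untreated_mean x 1 + (\<Sum>s=2..t. \<delta> s)"
proof -
  have "untreated_mean x s - untreated_mean x (s - 1) = \<delta> s" if "s \<in> {2..t}" for s
  proof -
    have s: "s \<in> {2..T}" "s \<in> {1..T}" "s - 1 \<in> {1..T}" using that assms(3) by auto
    show ?thesis
      using dose_invariant_trendD[OF trend assms(2) s(1)] Bochner_Integration.integral_diff[OF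
          integrable_untreated[OF assms(2) s(2)] integrable_untreated[OF assms(2) s(3)]]
      unfolding untreated_mean_def condE_GD_def by simp
  qed
  then show ?thesis
    using telescope_from_one[of t "untreated_mean x"] assms(3) by simp
qed

lemma did_eq_ATTbar_diagonal:
  assumes trend: "dose_invariant_trend \<delta>"
    and times: "1 \<le> t1" "t1 \<le> t2" "t2 < g" "g \<le> t3" "t3 \<le> t4" "t4 \<le> T"
  shows "\<exists>K. \<forall>x\<in>S.
           did_mean t1 t2 t3 t4 x
           = ATTbar T Ypo \<kappa> t3 t4 g x x + K"
proof (intro exI ballI)
  fix x assume x: "x \<in> S"
  define trend_sum where "trend_sum t = (\<Sum>s=2..t. \<delta> s)" for t
  have untreated: "untreated_mean x t = untreated_mean x 1 + trend_sum t" if "t \<in> {1..T}" for t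
    unfolding trend_sum_def using untreated_mean_trend[OF trend x that] .
  have "tavg t1 t2 (treated_mean x) = tavg t1 t2 (\<lambda>t. untreated_mean x 1 + trend_sum t)"
  proof (rule tavg_cong)
    fix t assume "t \<in> {t1..t2}"
    then show "treated_mean x t = untreated_mean x 1 + trend_sum t"
      using times treated_mean_before_treatment[OF x, of t] untreated[of t] by simp
  qed
  then have pre: "tavg t1 t2 (treated_mean x) = untreated_mean x 1 + tavg t1 t2 trend_sum"
    using times(2) by (simp only: tavg_add tavg_const)
  have "{t3..t4} \<subseteq> {1..T}" using times by auto
  then have "ATTbar T Ypo \<kappa> t3 t4 g x x = tavg t3 t4 (\<lambda>t. treated_mean x t - untreated_mean x t)"
    by (rule ATTbar_diagonal[OF x])
  also have "\<dots> = tavg t3 t4 (\<lambda>t. treated_mean x t - (untreated_mean x 1 + trend_sum t))"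
  proof (rule tavg_cong)
    fix t assume "t \<in> {t3..t4}"
    then show "treated_mean x t - untreated_mean x t = treated_mean x t - (untreated_mean x 1 + trend_sum t)"
      using times untreated[of t] by simp
  qed
  also have "\<dots> = tavg t3 t4 (treated_mean x) - untreated_mean x 1 - tavg t3 t4 trend_sum"
    using times(5) by (simp only: tavg_diff tavg_add tavg_const diff_diff_eq)
  finally have post: "ATTbar T Ypo \<kappa> t3 t4 g x x
      = tavg t3 t4 (treated_mean x) - untreated_mean x 1 - tavg t3 t4 trend_sum" .
  show "did_mean t1 t2 t3 t4 x
      = ATTbar T Ypo \<kappa> t3 t4 g x x + (tavg t3 t4 trend_sum - tavg t1 t2 trend_sum)"
    using times did_mean_eq[OF x] pre post by simp
qed

lemma did_has_derivative:
  assumes increments: "\<And>s. s \<in> {2..T} \<Longrightarrow> \<exists>L. ((\<lambda>x. condE_GD \<kappa> g x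
                 (\<lambda>\<omega>. Yobs T Ypo G D s \<omega> - Yobs T Ypo G D (s - 1) \<omega>)) has_real_derivative L) (at d within S)"
    and "d \<in> S" and times: "1 \<le> t1" "t1 \<le> t2" "t2 \<le> T" "1 \<le> t3" "t3 \<le> t4" "t4 \<le> T"
  shows "\<exists>L. (did_mean t1 t2 t3 t4 has_real_derivative L) (at d within S)"
proof -
  define increment where
    "increment s x = condE_GD \<kappa> g x (\<lambda>\<omega>. Yobs T Ypo G D s \<omega> - Yobs T Ypo G D (s - 1) \<omega>)" for s x
  obtain L where L: "\<And>s. s \<in> {2..T} \<Longrightarrow> (increment s has_real_derivative L s) (at d within S)"
    using increments unfolding increment_def by metis
  define cumulative where "cumulative x t = (\<Sum>s=2..t. increment s x)" for x t
  have "((\<lambda>x. tavg a b (cumulative x)) has_real_derivative tavg a b (\<lambda>t. \<Sum>s=2..t. L s)) (at d within S)"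
    if "b \<le> T" for a b
    unfolding cumulative_def using that by (intro DERIV_tavg DERIV_sum L) auto
  then have deriv: "((\<lambda>x. tavg t3 t4 (cumulative x) - tavg t1 t2 (cumulative x)) has_real_derivative
               tavg t3 t4 (\<lambda>t. \<Sum>s=2..t. L s) - tavg t1 t2 (\<lambda>t. \<Sum>s=2..t. L s)) (at d within S)"
    using times by (intro DERIV_diff)
  have "did_mean t1 t2 t3 t4 x
      = (tavg t3 t4 (cumulative x) - tavg t1 t2 (cumulative x)) + 0" if x: "x \<in> S" for x
  proof -
    have telescope: "treated_mean x t = treated_mean x 1 + cumulative x t" if "t \<in> {1..T}" for t
      using telescope_from_one[of t "treated_mean x"] condE_GD_Yobs_increment[OF x] that
      unfolding cumulative_def increment_def by auto
    have "tavg a b (treated_mean x) = treated_mean x 1 + tavg a b (cumulative x)"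
      if "1 \<le> a" "a \<le> b" "b \<le> T" for a b
    proof -
      have "tavg a b (treated_mean x) = tavg a b (\<lambda>t. treated_mean x 1 + cumulative x t)"
        using telescope that by (intro tavg_cong) (metis atLeastAtMost_iff le_trans)
      then show ?thesis using that by (simp only: tavg_add tavg_const)
    qed
    then show ?thesis using did_mean_eq[OF x] times by simp
  qed
  from DERIV_transform_add_const[OF deriv \<open>d \<in> S\<close> this] show ?thesis ..
qed

lemma ATEbar_eq_ATTbar_diagonal:
  assumes trend: "dose_invariant_trend \<delta>"
    and selection: "no_selection_on_dose"
    and G_meas: "G \<in> measurable M (count_space UNIV)"
    and integrable_treated_M: "\<And>x t. x \<in> S \<Longrightarrow> t \<in> {1..T} \<Longrightarrow> integrable M (Ypo t g x)"
    and integrable_untreated_M: "\<And>t. t \<in> {1..T} \<Longrightarrow> integrable M (Y0 T Ypo t)"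
    and times: "2 \<le> t3" "t4 \<le> T"
  shows "\<exists>K. \<forall>x\<in>S. ATEbar M T G Ypo t3 t4 g x = ATTbar T Ypo \<kappa> t3 t4 g x x + K"
proof (intro exI ballI)
  fix x assume x: "x \<in> S"
  define untreated_G where "untreated_G t = condE_G M G g (Y0 T Ypo t)" for t
  have "condE_G M G g (\<lambda>\<omega>. Ypo t g x \<omega> - Y0 T Ypo t \<omega>)
      = (treated_mean x t - untreated_mean x t) + (\<delta> t + untreated_G (t - 1) - untreated_G t)"
    if "t \<in> {t3..t4}" for t
  proof -
    have t: "t \<in> {1..T}" "t - 1 \<in> {1..T}" "t \<in> {2..T}" using that times by auto
    have "condE_G M G g (\<lambda>\<omega>. Ypo t g x \<omega> - Y0 T Ypo (t - 1) \<omega>)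
        = treated_mean x t - untreated_mean x (t - 1)"
      using no_selection_on_doseD[OF selection x t(3)] Bochner_Integration.integral_diff[OF
          integrable_treated[OF x t(1)] integrable_untreated[OF x t(2)]]
      unfolding treated_mean_def untreated_mean_def condE_GD_def by simp
    moreover have "untreated_mean x t - untreated_mean x (t - 1) = \<delta> t"
      using dose_invariant_trendD[OF trend x t(3)] Bochner_Integration.integral_diff[OF
          integrable_untreated[OF x t(1)] integrable_untreated[OF x t(2)]]
      unfolding untreated_mean_def condE_GD_def by simp
    ultimately show ?thesis
      using condE_G_diff[OF G_meas integrable_treated_M[OF x t(1)] integrable_untreated_M[OF t(1)]]
        condE_G_diff[OF G_meas integrable_treated_M[OF x t(1)] integrable_untreated_M[OF t(2)]]
      unfolding untreated_G_def by simp
  qed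
  then have "ATEbar M T G Ypo t3 t4 g x
      = tavg t3 t4 (\<lambda>t. treated_mean x t - untreated_mean x t)
        + tavg t3 t4 (\<lambda>t. \<delta> t + untreated_G (t - 1) - untreated_G t)"
    unfolding ATEbar_def tavg_add[symmetric] by (rule tavg_cong)
  moreover have "{t3..t4} \<subseteq> {1..T}" using times by auto
  ultimately show "ATEbar M T G Ypo t3 t4 g x
      = ATTbar T Ypo \<kappa> t3 t4 g x x + tavg t3 t4 (\<lambda>t. \<delta> t + untreated_G (t - 1) - untreated_G t)"
    using ATTbar_diagonal[OF x] by simp
qed

lemma did_derivative_ATTbar:
  assumes trend: "dose_invariant_trend \<delta>"
    and differentiable: "(\<lambda>(a, b). ATTbar T Ypo \<kappa> t3 t4 g a b) differentiable (at (d, d) within S \<times> S)"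
    and "d \<in> S" and times: "1 \<le> t1" "t1 \<le> t2" "t2 < g" "g \<le> t3" "t3 \<le> t4" "t4 \<le> T"
  shows "\<exists>La Lb.
           ((\<lambda>l. ATTbar T Ypo \<kappa> t3 t4 g l d) has_real_derivative La) (at d within S) \<and>
           ((\<lambda>l. ATTbar T Ypo \<kappa> t3 t4 g d l) has_real_derivative Lb) (at d within S) \<and>
           (did_mean t1 t2 t3 t4 has_real_derivative La + Lb) (at d within S)"
proof -
  obtain K where K: "\<And>x. x \<in> S \<Longrightarrow>
      did_mean t1 t2 t3 t4 x
      = ATTbar T Ypo \<kappa> t3 t4 g x x + K"
    using did_eq_ATTbar_diagonal[OF trend times] by blast
  obtain La Lb where
    "((\<lambda>l. ATTbar T Ypo \<kappa> t3 t4 g l d) has_real_derivative La) (at d within S)"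
    "((\<lambda>l. ATTbar T Ypo \<kappa> t3 t4 g d l) has_real_derivative Lb) (at d within S)"
    and diagonal: "((\<lambda>x. ATTbar T Ypo \<kappa> t3 t4 g x x) has_real_derivative La + Lb) (at d within S)"
    using has_real_derivative_diagonal[OF differentiable \<open>d \<in> S\<close>] by blast
  with DERIV_transform_add_const[OF diagonal \<open>d \<in> S\<close> K] show ?thesis by blast
qed

lemma did_derivative_ATEbar:
  assumes trend: "dose_invariant_trend \<delta>"
    and selection: "no_selection_on_dose"
    and increments: "\<And>s. s \<in> {2..T} \<Longrightarrow> \<exists>L. ((\<lambda>x. condE_GD \<kappa> g x
                 (\<lambda>\<omega>. Yobs T Ypo G D s \<omega> - Yobs T Ypo G D (s - 1) \<omega>)) has_real_derivative L) (at d within S)"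
    and G_meas: "G \<in> measurable M (count_space UNIV)"
    and integrable_treated_M: "\<And>x t. x \<in> S \<Longrightarrow> t \<in> {1..T} \<Longrightarrow> integrable M (Ypo t g x)"
    and integrable_untreated_M: "\<And>t. t \<in> {1..T} \<Longrightarrow> integrable M (Y0 T Ypo t)"
    and "d \<in> S" and times: "1 \<le> t1" "t1 \<le> t2" "t2 < g" "g \<le> t3" "t3 \<le> t4" "t4 \<le> T" "2 \<le> g"
  shows "\<exists>L. ((\<lambda>x. ATEbar M T G Ypo t3 t4 g x) has_real_derivative L) (at d within S) \<and>
             (did_mean t1 t2 t3 t4 has_real_derivative L) (at d within S)"
proof -
  obtain L where did: "(did_mean t1 t2 t3 t4 has_real_derivative L) (at d within S)"
    using did_has_derivative[OF increments \<open>d \<in> S\<close>] times by fastforce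
  obtain K where K: "\<And>x. x \<in> S \<Longrightarrow>
      did_mean t1 t2 t3 t4 x
      = ATTbar T Ypo \<kappa> t3 t4 g x x + K"
    using did_eq_ATTbar_diagonal[OF trend] times by blast
  have "\<exists>K'. \<forall>x\<in>S. ATEbar M T G Ypo t3 t4 g x = ATTbar T Ypo \<kappa> t3 t4 g x x + K'"
    by (rule ATEbar_eq_ATTbar_diagonal[OF trend selection G_meas integrable_treated_M integrable_untreated_M])
      (use times in auto)
  then obtain K' where K': "\<And>x. x \<in> S \<Longrightarrow> ATEbar M T G Ypo t3 t4 g x = ATTbar T Ypo \<kappa> t3 t4 g x x + K'"
    by blast
  have "ATEbar M T G Ypo t3 t4 g x
      = did_mean t1 t2 t3 t4 x
        + (K' - K)" if "x \<in> S" for x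
    using K[OF that] K'[OF that] by simp
  with DERIV_transform_add_const[OF did \<open>d \<in> S\<close>] did show ?thesis by blast
qed

end

theorem lemma11:
  fixes M :: "'a measure" and T :: nat and Gs :: "nat set"
    and G :: "'a \<Rightarrow> nat" and D :: "'a \<Rightarrow> real" and dL dU :: real
    and Ypo :: "nat \<Rightarrow> nat \<Rightarrow> real \<Rightarrow> 'a \<Rightarrow> real"
    and \<kappa> :: "nat \<Rightarrow> real \<Rightarrow> 'a measure"
    and g t1 t2 t3 t4 :: nat and d :: real
  assumes prob: "prob_space M"
    and Gs_sub: "Gs \<subseteq> {2..Suc T}"
    and G_meas: "G \<in> measurable M (count_space UNIV)"
    and D_meas: "D \<in> borel_measurable M"
    and G_in: "\<forall>\<omega>\<in>space M. G \<omega> \<in> Gs"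
    \<comment> \<open>D = 0 exactly for never-treated units, D in D+ for treated ones\<close>
    and D_zero: "\<forall>\<omega>\<in>space M. D \<omega> = 0 \<longleftrightarrow> G \<omega> = Suc T"
    and D_pos: "\<forall>\<omega>\<in>space M. G \<omega> \<le> T \<longrightarrow> D \<omega> \<in> {dL..dU}"
    \<comment> \<open>finite means (unconditional and conditional), observed outcomes are random variables\<close>
    and integ: "\<forall>t\<in>{1..T}. \<forall>g'\<in>Gs. \<forall>d'\<in>insert 0 {dL..dU}. integrable M (Ypo t g' d')"
    and integ_c: "\<forall>g'\<in>Gs. g' \<le> T \<longrightarrow> (\<forall>d'\<in>{dL..dU}. \<forall>t\<in>{1..T}. \<forall>g''\<in>Gs.
                     \<forall>d''\<in>insert 0 {dL..dU}. integrable (\<kappa> g' d') (Ypo t g'' d''))"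
    and Yobs_meas: "\<forall>t\<in>{1..T}. Yobs T Ypo G D t \<in> borel_measurable M"
    \<comment> \<open>kappa is the conditional distribution given (G,D)\<close>
    and cond: "\<forall>g'\<in>Gs. g' \<le> T \<longrightarrow> is_cond_dist M G D {dL..dU} \<kappa> g'"
    \<comment> \<open>2-MP (a)\<close>
    and P_D0: "measure M {\<omega>\<in>space M. D \<omega> = 0} > 0"
    and supp: "\<forall>g'\<in>Gs. g' \<le> T \<longrightarrow> (\<forall>d'\<in>{dL..dU}. \<forall>\<epsilon>>0.
                 measure M {\<omega>\<in>space M. G \<omega> = g' \<and> \<bar>D \<omega> - d'\<bar> < \<epsilon>} > 0)"
    \<comment> \<open>2-MP (b)\<close>
    and dLU: "0 < dL" "dL < dU"
    \<comment> \<open>2-MP (c)\<close>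
    and C1: "\<forall>g'\<in>Gs. g' \<le> T \<longrightarrow> (\<forall>t\<in>{2..T}. C1_within {dL..dU}
               (\<lambda>x. condE_GD \<kappa> g' x (\<lambda>\<omega>. Yobs T Ypo G D t \<omega> - Yobs T Ypo G D (t - 1) \<omega>)))"
    \<comment> \<open>3-MP (a): no anticipation\<close>
    and noant: "\<forall>g'\<in>Gs. \<forall>d'\<in>insert 0 {dL..dU}. \<forall>t. t < g' \<longrightarrow>
                  (\<forall>\<omega>\<in>space M. Ypo t g' d' \<omega> = Y0 T Ypo t \<omega>)"
    \<comment> \<open>3-MP (b): staggered adoption\<close>
    and stag: "\<forall>\<omega>\<in>space M. Wpath G D 1 \<omega> = 0 \<and>
                 (\<forall>t\<in>{2..T}. Wpath G D (t - 1) \<omega> = D \<omega> \<longrightarrow> Wpath G D t \<omega> = D \<omega>)"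
    \<comment> \<open>the group and periods\<close>
    and g_in: "g \<in> Gs" "g \<noteq> Suc T"
    and times: "1 \<le> t1" "t1 \<le> t2" "t2 < g" "g \<le> t3" "t3 \<le> t4" "t4 \<le> T"
    and d_in: "d \<in> {dL..dU}"
  shows
    "(PT4a M T Gs D {dL..dU} Ypo \<kappa> \<and>
      (\<forall>p\<in>{dL..dU} \<times> {dL..dU}.
         (\<lambda>(a, b). ATTbar T Ypo \<kappa> t3 t4 g a b) differentiable (at p within {dL..dU} \<times> {dL..dU}))
      \<longrightarrow> (\<exists>La Lb.
            ((\<lambda>l. ATTbar T Ypo \<kappa> t3 t4 g l d) has_real_derivative La) (at d within {dL..dU}) \<and>
            ((\<lambda>l. ATTbar T Ypo \<kappa> t3 t4 g d l) has_real_derivative Lb) (at d within {dL..dU}) \<and>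
            ((\<lambda>x. condE_GD \<kappa> g x (\<lambda>\<omega>. tavg t3 t4 (\<lambda>t. Yobs T Ypo G D t \<omega>)
                                       - tavg t1 t2 (\<lambda>t. Yobs T Ypo G D t \<omega>)))
               has_real_derivative (La + Lb)) (at d within {dL..dU})))
     \<and>
     (PT5 M T Gs G D {dL..dU} Ypo \<kappa>
      \<longrightarrow> (\<exists>L.
            ((\<lambda>x. ATEbar M T G Ypo t3 t4 g x) has_real_derivative L) (at d within {dL..dU}) \<and>
            ((\<lambda>x. condE_GD \<kappa> g x (\<lambda>\<omega>. tavg t3 t4 (\<lambda>t. Yobs T Ypo G D t \<omega>)
                                       - tavg t1 t2 (\<lambda>t. Yobs T Ypo G D t \<omega>)))
               has_real_derivative L) (at d within {dL..dU})))"
proof -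
  have gT: "g \<le> T" and g2: "2 \<le> g" using g_in Gs_sub by auto
  have "{\<omega>\<in>space M. D \<omega> = 0} \<noteq> {}" using P_D0 by force
  then obtain \<omega>0 where "\<omega>0 \<in> space M" "D \<omega>0 = 0" by blast
  then have never_treated: "Suc T \<in> Gs" using D_zero G_in by force
  interpret treated_group M T G D "{dL..dU}" Ypo \<kappa> g
  proof
    show "is_cond_dist M G D {dL..dU} \<kappa> g" using cond g_in gT by blast
    show "Ypo t g x \<omega> = Y0 T Ypo t \<omega>" if "x \<in> {dL..dU}" "t < g" "\<omega> \<in> space M" for x t \<omega>
      using noant g_in(1) that by blast
    show "integrable (\<kappa> g x) (Ypo t g x)" if "x \<in> {dL..dU}" "t \<in> {1..T}" for x t
      using integ_c g_in gT that by blast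
    show "integrable (\<kappa> g x) (Y0 T Ypo t)" if "x \<in> {dL..dU}" "t \<in> {1..T}" for x t
      using integ_c g_in gT never_treated that unfolding Y0_def by blast
    show "Yobs T Ypo G D t \<in> borel_measurable M" if "t \<in> {1..T}" for t
      using Yobs_meas that by blast
  qed
  have trend: "dose_invariant_trend (\<lambda>s. condE_D0 M D (\<lambda>\<omega>. Y0 T Ypo s \<omega> - Y0 T Ypo (s - 1) \<omega>))"
    if "PT4a M T Gs D {dL..dU} Ypo \<kappa>"
    using that g_in gT unfolding PT4a_def dose_invariant_trend_def by blast
  have increments: "\<exists>L. ((\<lambda>x. condE_GD \<kappa> g x (\<lambda>\<omega>. Yobs T Ypo G D s \<omega> - Yobs T Ypo G D (s - 1) \<omega>))
      has_real_derivative L) (at d within {dL..dU})" if "s \<in> {2..T}" for s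
    using C1 g_in gT that d_in unfolding C1_within_def by blast
  show ?thesis
  proof (intro conjI impI, goal_cases)
    case 1
    show ?case
      by (rule did_derivative_ATTbar[OF trend[OF 1[THEN conjunct1]], unfolded did_mean_def[abs_def]])
        (use 1 d_in times in auto)
  next
    case 2
    then have PT4: "PT4a M T Gs D {dL..dU} Ypo \<kappa>" unfolding PT5_def by blast
    have selection: "no_selection_on_dose"
      using 2 g_in gT unfolding PT5_def no_selection_on_dose_def by blast
    show ?case
      by (rule did_derivative_ATEbar[OF trend[OF PT4] selection increments G_meas, unfolded did_mean_def[abs_def]])
        (use integ never_treated g_in d_in times g2 in \<open>auto simp: Y0_def\<close>)
  qed
qed

end
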